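(* Let $m\ge2$, $n\ge2$, and let $\mathcal{A}\in\mathbb{S}_{m,n}$ be a Hankel tensor with generating vector $v=(v_0,\dots,v_{(n-1)m})^T$. (i) If $v_0=v_{(n-1)m}=0$, then $\mathcal{A}$ is completely positive if and only if $\mathcal{A}$ is the zero tensor. (ii) If $n\ge3$, $\mathcal{A}$ is completely positive, and $v_{(i-1)m}=0$ for some $2\le i\le n-1$, then $v_0\ge0$, $v_{(n-1)m}\ge0$ and $\mathcal{A}=v_0(e^{(1)})^m+v_{(n-1)m}(e^{(n)})^m$. (iii) If $v_0=0$ and $v_j\ne0$ for some $j\in[m-1]$, then $\mathcal{A}$ is not completely positive.
   Context: $\mathcal{A}=(a_{i_1\ldots i_m})\in\mathbb{S}_{m,n}$ is a Hankel tensor with generating vector $v$ if $a_{i_1\ldots i_m}=v_{i_1+\dots+i_m-m}$ for all $i_1,\dots,i_m\in[n]$. $e^{(i)}$ is the $i$th standard basis vector of $\mathbb{R}^n$; $(u^m)_{i_1\ldots i_m}=u_{i_1}\cdots u_{i_m}$. A tensor $\mathcal{A}\in\mathbb{S}_{m,n}$ is completely positive if $\mathcal{A}=\sum_{k=1}^r(u^{(k)})^m$ for some $r\ge1$ and $u^{(k)}\in\mathbb{R}^n_+$. *)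

theory Defs
  imports Complex_Main
begin

text \<open>Indices are 0-based: an index tuple (i_1,...,i_m) with i_k in [n]
  is represented by a list of length m with entries in {0..<n} (entry i-1 for paper index i).
  A real tensor of order m and dimension n is a function on such lists
  (values outside valid index lists are irrelevant).\<close>

definition valid_idx :: "nat \<Rightarrow> nat \<Rightarrow> nat list \<Rightarrow> bool" where
  "valid_idx m n is \<longleftrightarrow> length is = m \<and> (\<forall>j\<in>set is. j < n)"

text \<open>Hankel tensor with generating vector v: a_{i_1..i_m} = v_{i_1+...+i_m-m} (1-based),
  i.e. the sum of the 0-based indices.\<close>
definition hankel_tensor :: "nat \<Rightarrow> nat \<Rightarrow> (nat list \<Rightarrow> real) \<Rightarrow> (nat \<Rightarrow> real) \<Rightarrow> bool" where
  "hankel_tensor m n A v \<longleftrightarrow> (\<forall>is. valid_idx m n is \<longrightarrow> A is = v (sum_list is))"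

definition tpow :: "(nat \<Rightarrow> real) \<Rightarrow> nat list \<Rightarrow> real" where
  "tpow u is = prod_list (map u is)"

definition std_basis :: "nat \<Rightarrow> nat \<Rightarrow> real" where
  "std_basis i = (\<lambda>j. if j = i then 1 else 0)"

definition completely_positive :: "nat \<Rightarrow> nat \<Rightarrow> (nat list \<Rightarrow> real) \<Rightarrow> bool" where
  "completely_positive m n A \<longleftrightarrow>
     (\<exists>r::nat. r \<ge> 1 \<and> (\<exists>u :: nat \<Rightarrow> nat \<Rightarrow> real.
        (\<forall>k<r. \<forall>i<n. u k i \<ge> 0) \<and>
        (\<forall>is. valid_idx m n is \<longrightarrow> A is = (\<Sum>k<r. tpow (u k) is))))"

definition zero_tensor :: "nat \<Rightarrow> nat \<Rightarrow> (nat list \<Rightarrow> real) \<Rightarrow> bool" where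
  "zero_tensor m n A \<longleftrightarrow> (\<forall>is. valid_idx m n is \<longrightarrow> A is = 0)"

end

theory Submission
  imports Defs
begin

text \<open>Write the tensor as \<open>\<Sum>\<^sub>k (u\<^sub>k)\<^sup>m\<close> with nonnegative vectors \<open>u\<^sub>k\<close> (coordinates
  numbered from 1 here, as in the paper). The diagonal entry \<open>v\<^sub>(\<^sub>j\<^sub>-\<^sub>1\<^sub>)\<^sub>m = \<Sum>\<^sub>k (u\<^sub>k\<^sub>j)\<^sup>m\<close>
  vanishes only if the \<open>j\<close>-th coordinate of every \<open>u\<^sub>k\<close> vanishes, and then so does every entry
  whose index contains \<open>j\<close>. As a Hankel entry depends only on the index sum, the zero spreads
  to every sum attained by such an index. For (i), every admissible sum is attained by an
  index containing 1 or \<open>n\<close>. For (ii), the index \<open>(i, i \<plusminus> 2, i \<plusminus> 1, \<dots>, i \<plusminus> 1)\<close> carries the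
  zero from coordinate \<open>i\<close> to its neighbours, so every interior coordinate vanishes; and an index
  made of 1s and \<open>n\<close>s containing both has the same sum as the one with a 2 and an \<open>n - 1\<close> in
  their place. For (iii), \<open>v\<^sub>j\<close> with \<open>j < m\<close> is the entry at \<open>(2, \<dots>, 2, 1, \<dots>, 1)\<close>.\<close>

lemma sum_list_le_length_mult:
  fixes xs :: "nat list"
  assumes "\<forall>x\<in>set xs. x \<le> b"
  shows "sum_list xs \<le> b * length xs"
  using assms by (induction xs) auto

lemma sum_list_eq_length_mult:
  fixes xs :: "nat list"
  assumes "set xs \<subseteq> {a}"
  shows "sum_list xs = length xs * a"
  using assms by (induction xs) auto

lemma tpow_std_basis: "tpow (std_basis a) xs = (if set xs \<subseteq> {a} then 1 else 0)"
  by (induction xs) (auto simp: tpow_def std_basis_def)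

lemma valid_idx_Cons [simp]:
  "valid_idx m n (x # xs) \<longleftrightarrow> 0 < m \<and> x < n \<and> valid_idx (m - 1) n xs"
  by (auto simp: valid_idx_def)

lemma exists_valid_idx_with_sum:
  assumes "0 < n" and "s \<le> (n - 1) * m"
  shows "\<exists>idx. valid_idx m n idx \<and> sum_list idx = s"
  using assms(2)
proof (induction m arbitrary: s)
  case 0
  then show ?case by (simp add: valid_idx_def)
next
  case (Suc m)
  define x where "x = min s (n - 1)"
  have "s - x \<le> (n - 1) * m"
    using Suc.prems by (auto simp: x_def min_def algebra_simps)
  then obtain idx where "valid_idx m n idx" "sum_list idx = s - x"
    using Suc.IH by blast
  then show ?case
    using \<open>0 < n\<close> by (intro exI[of _ "x # idx"]) (auto simp: x_def valid_idx_def)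
qed

lemma valid_idx_rebalance:
  assumes "valid_idx m n idx" and "a \<in> set idx" and "b \<in> set (remove1 a idx)"
    and "a' + b' = a + b" and "a' < n" and "b' < n"
  shows "\<exists>t. valid_idx m n t \<and> a' \<in> set t \<and> sum_list t = sum_list idx"
proof -
  define rest where "rest = remove1 b (remove1 a idx)"
  have "sum_list idx = a + sum_list (remove1 a idx)"
    using assms(2) sum_list_map_remove1[of a idx id] by simp
  also have "\<dots> = a + b + sum_list rest"
    using assms(3) sum_list_map_remove1[of b "remove1 a idx" id] by (simp add: rest_def)
  finally have "sum_list idx = a + b + sum_list rest" .
  moreover have "length rest + 2 = m"
  proof -
    have "0 < length (remove1 a idx)"
      using assms(3) by (metis length_pos_if_in_set)
    then show ?thesis
      using assms(1-3) by (auto simp: rest_def length_remove1 valid_idx_def)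
  qed
  moreover have "set rest \<subseteq> set idx"
    unfolding rest_def by (meson order.trans set_remove1_subset)
  ultimately show ?thesis
    using assms(1,4-6) by (intro exI[of _ "a' # b' # rest"]) (auto simp: valid_idx_def)
qed

lemma valid_idx_with_interior_entry:
  assumes "3 \<le> n" and "valid_idx m n idx" and "\<not> set idx \<subseteq> {0}" and "\<not> set idx \<subseteq> {n - 1}"
  obtains t j where "valid_idx m n t" and "sum_list t = sum_list idx"
    and "j \<in> set t" and "0 < j" and "j < n - 1"
proof (cases "\<exists>j\<in>set idx. 0 < j \<and> j < n - 1")
  case True
  then show ?thesis
    using assms(2) that by blast
next
  case False
  obtain x y where "x \<in> set idx" "x \<noteq> 0" "y \<in> set idx" "y \<noteq> n - 1"
    using assms(3,4) by blast
  moreover have "x < n" and "y < n"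
    using assms(2) calculation by (auto simp: valid_idx_def)
  moreover have "\<not> (0 < x \<and> x < n - 1)" and "\<not> (0 < y \<and> y < n - 1)"
    using False calculation by blast+
  ultimately have "y = 0" and "x = n - 1"
    by arith+
  then have "0 \<in> set idx" and "n - 1 \<in> set (remove1 0 idx)"
    using \<open>x \<in> set idx\<close> \<open>y \<in> set idx\<close> assms(1) by auto
  moreover have "1 + (n - 2) = 0 + (n - 1)" and "1 < n" and "n - 2 < n"
    using assms(1) by simp_all
  ultimately obtain t where "valid_idx m n t" "1 \<in> set t" "sum_list t = sum_list idx"
    using valid_idx_rebalance[OF assms(2)] by blast
  then show ?thesis
    using assms(1) that by fastforce
qed

locale cp_hankel =
  fixes m n :: nat and v :: "nat \<Rightarrow> real" and r :: nat and u :: "nat \<Rightarrow> nat \<Rightarrow> real"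
  assumes nonneg: "\<And>k i. k < r \<Longrightarrow> i < n \<Longrightarrow> 0 \<le> u k i"
    and entry_eq: "\<And>idx. valid_idx m n idx \<Longrightarrow> v (sum_list idx) = (\<Sum>k<r. tpow (u k) idx)"
begin

definition zero_coord :: "nat \<Rightarrow> bool" where
  "zero_coord j \<longleftrightarrow> (\<forall>k<r. u k j = 0)"

lemma diagonal_entry:
  assumes "j < n"
  shows "v (j * m) = (\<Sum>k<r. u k j ^ m)"
proof -
  have "valid_idx m n (replicate m j)"
    using assms by (simp add: valid_idx_def)
  from entry_eq[OF this] show ?thesis
    by (simp add: sum_list_replicate tpow_def mult.commute)
qed

lemma diagonal_entry_nonneg: "j < n \<Longrightarrow> 0 \<le> v (j * m)"
  by (auto simp: diagonal_entry intro!: sum_nonneg zero_le_power nonneg)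

lemma zero_coord_if_diagonal_zero:
  assumes "0 < m" and "j < n" and "v (j * m) = 0"
  shows "zero_coord j"
proof -
  have "(\<Sum>k<r. u k j ^ m) = 0"
    using assms diagonal_entry by simp
  moreover have "\<forall>k\<in>{..<r}. 0 \<le> u k j ^ m"
    using nonneg \<open>j < n\<close> by simp
  ultimately have "\<forall>k\<in>{..<r}. u k j ^ m = 0"
    using sum_nonneg_eq_0_iff[OF finite_lessThan, of r "\<lambda>k. u k j ^ m"] by blast
  then show ?thesis
    using \<open>0 < m\<close> by (simp add: zero_coord_def)
qed

lemma entry_zero_if_zero_coord:
  assumes "valid_idx m n idx" and "j \<in> set idx" and "zero_coord j"
  shows "v (sum_list idx) = 0"
proof -
  have "tpow (u k) idx = 0" if "k < r" for k
    using assms that by (auto simp: zero_coord_def tpow_def prod_list_zero_iff)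
  then show ?thesis
    using entry_eq[OF assms(1)] by simp
qed

lemma zero_coord_spreads:
  assumes "2 \<le> m" and "zero_coord i" and "i < n" and "i \<le> 2 * j" and "2 * j - i < n"
  shows "zero_coord j"
proof -
  define t where "t = i # (2 * j - i) # replicate (m - 2) j"
  have "j < n"
    using assms(3-5) by linarith
  then have "valid_idx m n t"
    using assms by (auto simp: t_def valid_idx_def)
  moreover have "sum_list t = j * m"
  proof -
    have "sum_list t = 2 * j + (m - 2) * j"
      using assms(4) by (simp add: t_def sum_list_replicate)
    also have "\<dots> = j * m"
      using assms(1) by (simp add: algebra_simps flip: add_mult_distrib)
    finally show ?thesis .
  qed
  ultimately have "v (j * m) = 0"
    using entry_zero_if_zero_coord[of t i] assms(2) by (simp add: t_def)
  then show ?thesis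
    using assms(1) \<open>j < n\<close> zero_coord_if_diagonal_zero by simp
qed

lemma interior_zero_coords:
  assumes "2 \<le> m" and "zero_coord i" and "0 < i" and "i < n - 1" and "0 < j" and "j < n - 1"
  shows "zero_coord j"
proof (cases "i \<le> j")
  case True
  then show ?thesis
  proof (induction j rule: dec_induct)
    case base
    show ?case using assms(2) .
  next
    case (step k)
    then show ?case
      using zero_coord_spreads[of k "Suc k"] assms(1,6) by simp
  qed
next
  case False
  then have "j \<le> i" by simp
  then show ?thesis
  proof (induction j rule: inc_induct)
    case base
    show ?case using assms(2) .
  next
    case (step k)
    then show ?case
      using zero_coord_spreads[of "Suc k" k] assms(1,4,5) by simp
  qed
qed

lemma entry_zero_if_corner_diagonals_zero:
  assumes "2 \<le> m" and "v 0 = 0" and "v ((n - 1) * m) = 0" and "valid_idx m n idx"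
  shows "v (sum_list idx) = 0"
proof -
  obtain x idx' where "idx = x # idx'"
    using assms(1,4) by (cases idx) (auto simp: valid_idx_def)
  then have "0 < n"
    using assms(4) by (auto simp: valid_idx_def)
  have first: "zero_coord 0" and last: "zero_coord (n - 1)"
    using zero_coord_if_diagonal_zero[of 0] zero_coord_if_diagonal_zero[of "n - 1"]
      assms(1-3) \<open>0 < n\<close> by simp_all
  define s where "s = sum_list idx"
  have "s \<le> (n - 1) * m"
    using sum_list_le_length_mult[of idx "n - 1"] assms(4)
    by (fastforce simp: s_def valid_idx_def)
  show ?thesis
  proof (cases "s \<le> (n - 1) * (m - 1)")
    case True
    then obtain t where "valid_idx (m - 1) n t" "sum_list t = s"
      using exists_valid_idx_with_sum \<open>0 < n\<close> by blast
    then have "valid_idx m n (0 # t)" and "sum_list (0 # t) = s"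
      using assms(1) \<open>0 < n\<close> by simp_all
    then show ?thesis
      using entry_zero_if_zero_coord first by (fastforce simp: s_def)
  next
    case False
    have "(n - 1) * 1 \<le> (n - 1) * (m - 1)"
      using assms(1) by (intro mult_le_mono2) simp
    then have "n - 1 \<le> (n - 1) * (m - 1)"
      by simp
    moreover have "(n - 1) * m = (n - 1) * (m - 1) + (n - 1)"
      using assms(1) by (cases m) simp_all
    ultimately have "n - 1 \<le> s" and "s - (n - 1) \<le> (n - 1) * (m - 1)"
      using False \<open>s \<le> (n - 1) * m\<close> by linarith+
    then obtain t where "valid_idx (m - 1) n t" "sum_list t = s - (n - 1)"
      using exists_valid_idx_with_sum \<open>0 < n\<close> by blast
    then have "valid_idx m n ((n - 1) # t)" and "sum_list ((n - 1) # t) = s"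
      using assms(1) \<open>0 < n\<close> \<open>n - 1 \<le> s\<close> by simp_all
    then show ?thesis
      using entry_zero_if_zero_coord last by (fastforce simp: s_def)
  qed
qed

lemma entry_zero_below_order:
  assumes "2 \<le> n" and "v 0 = 0" and "j < m"
  shows "v j = 0"
proof -
  define t where "t = replicate j (1::nat) @ replicate (m - j) 0"
  have "valid_idx m n t" and "0 \<in> set t" and "sum_list t = j"
    using assms by (auto simp: t_def valid_idx_def sum_list_replicate)
  moreover have "zero_coord 0"
    using zero_coord_if_diagonal_zero[of 0] assms by simp
  ultimately show ?thesis
    using entry_zero_if_zero_coord by metis
qed

lemma entry_eq_corners_if_interior_diagonal_zero:
  assumes "2 \<le> m" and "3 \<le> n" and "0 < i" and "i < n - 1" and "v (i * m) = 0"
    and "valid_idx m n idx"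
  shows "v (sum_list idx) =
    v 0 * tpow (std_basis 0) idx + v ((n - 1) * m) * tpow (std_basis (n - 1)) idx"
proof -
  have "idx \<noteq> []" and "length idx = m"
    using assms(1,6) by (auto simp: valid_idx_def)
  consider (first) "set idx \<subseteq> {0}" | (last) "set idx \<subseteq> {n - 1}"
    | (mixed) "\<not> set idx \<subseteq> {0}" "\<not> set idx \<subseteq> {n - 1}"
    by blast
  then show ?thesis
  proof cases
    case first
    then have "\<not> set idx \<subseteq> {n - 1}"
      using \<open>idx \<noteq> []\<close> assms(2) by (auto simp: subset_singleton_iff)
    moreover have "sum_list idx = 0"
      using sum_list_eq_length_mult[OF first] by simp
    ultimately show ?thesis
      using first by (simp add: tpow_std_basis del: sum_list_eq_0_iff)
  next
    case last
    then have "\<not> set idx \<subseteq> {0}"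
      using \<open>idx \<noteq> []\<close> assms(2) by (auto simp: subset_singleton_iff)
    then show ?thesis
      using last sum_list_eq_length_mult[OF last] \<open>length idx = m\<close>
      by (simp add: tpow_std_basis mult.commute)
  next
    case mixed
    then obtain t j where "valid_idx m n t" "sum_list t = sum_list idx"
      and "j \<in> set t" "0 < j" "j < n - 1"
      using valid_idx_with_interior_entry assms(2,6) by blast
    moreover have "zero_coord i"
      using zero_coord_if_diagonal_zero assms(1,4,5) by simp
    ultimately have "v (sum_list idx) = 0"
      using interior_zero_coords entry_zero_if_zero_coord assms(1,3,4) by metis
    then show ?thesis
      using mixed by (simp add: tpow_std_basis)
  qed
qed

end

lemma cp_hankel_if_completely_positive:
  assumes "hankel_tensor m n A v" and "completely_positive m n A"
  obtains r u where "cp_hankel m n v r u"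
proof -
  obtain r :: nat and u where "\<forall>k<r. \<forall>i<n. 0 \<le> u k i"
    and "\<forall>idx. valid_idx m n idx \<longrightarrow> A idx = (\<Sum>k<r. tpow (u k) idx)"
    using assms(2) unfolding completely_positive_def by blast
  then have "cp_hankel m n v r u"
    using assms(1) by unfold_locales (auto simp: hankel_tensor_def)
  then show ?thesis ..
qed

lemma completely_positive_if_zero_tensor:
  assumes "0 < m" and "zero_tensor m n A"
  shows "completely_positive m n A"
  unfolding completely_positive_def
proof (intro exI conjI allI impI)
  fix idx
  assume "valid_idx m n idx"
  then have "idx \<noteq> []"
    using assms(1) by (auto simp: valid_idx_def)
  then have "tpow (\<lambda>i. 0) idx = 0"
    by (cases idx) (simp_all add: tpow_def)
  then show "A idx = (\<Sum>k<1. tpow ((\<lambda>k i. 0) k) idx)"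
    using assms(2) \<open>valid_idx m n idx\<close> by (simp add: zero_tensor_def)
qed simp_all

lemma completely_positive_hankel_iff_zero_tensor:
  assumes "2 \<le> m" and "hankel_tensor m n A v" and "v 0 = 0" and "v ((n - 1) * m) = 0"
  shows "completely_positive m n A \<longleftrightarrow> zero_tensor m n A"
proof
  assume "completely_positive m n A"
  then obtain r u where "cp_hankel m n v r u"
    by (rule cp_hankel_if_completely_positive[OF assms(2)])
  then show "zero_tensor m n A"
    using cp_hankel.entry_zero_if_corner_diagonals_zero assms
    by (simp add: zero_tensor_def hankel_tensor_def)
qed (use assms(1) completely_positive_if_zero_tensor in simp)

lemma completely_positive_hankel_eq_corners:
  assumes "2 \<le> m" and "3 \<le> n" and "hankel_tensor m n A v" and "completely_positive m n A"
    and "0 < i" and "i < n - 1" and "v (i * m) = 0"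
  shows "0 \<le> v 0" and "0 \<le> v ((n - 1) * m)"
    and "\<And>idx. valid_idx m n idx \<Longrightarrow>
      A idx = v 0 * tpow (std_basis 0) idx + v ((n - 1) * m) * tpow (std_basis (n - 1)) idx"
proof -
  obtain r u where cp: "cp_hankel m n v r u"
    by (rule cp_hankel_if_completely_positive[OF assms(3,4)])
  show "0 \<le> v 0" and "0 \<le> v ((n - 1) * m)"
    using cp_hankel.diagonal_entry_nonneg[OF cp, of 0]
      cp_hankel.diagonal_entry_nonneg[OF cp, of "n - 1"] assms(2) by simp_all
  show "A idx = v 0 * tpow (std_basis 0) idx + v ((n - 1) * m) * tpow (std_basis (n - 1)) idx"
    if "valid_idx m n idx" for idx
    using cp_hankel.entry_eq_corners_if_interior_diagonal_zero[OF cp assms(1,2,5-7) that]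
      assms(3) that by (simp add: hankel_tensor_def)
qed

lemma not_completely_positive_hankel:
  assumes "2 \<le> n" and "hankel_tensor m n A v" and "v 0 = 0" and "j < m" and "v j \<noteq> 0"
  shows "\<not> completely_positive m n A"
proof
  assume "completely_positive m n A"
  then obtain r u where "cp_hankel m n v r u"
    by (rule cp_hankel_if_completely_positive[OF assms(2)])
  then show False
    using cp_hankel.entry_zero_below_order assms(1,3-5) by blast
qed

theorem mainTheorem6:
  fixes m n :: nat and A :: "nat list \<Rightarrow> real" and v :: "nat \<Rightarrow> real"
  assumes "m \<ge> 2" and "n \<ge> 2" and "hankel_tensor m n A v"
  shows "(v 0 = 0 \<and> v ((n - 1) * m) = 0 \<longrightarrow>
            (completely_positive m n A \<longleftrightarrow> zero_tensor m n A))
       \<and> (n \<ge> 3 \<and> completely_positive m n A \<and>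
            (\<exists>i. 1 \<le> i \<and> i \<le> n - 2 \<and> v (i * m) = 0) \<longrightarrow>
            v 0 \<ge> 0 \<and> v ((n - 1) * m) \<ge> 0 \<and>
            (\<forall>is. valid_idx m n is \<longrightarrow>
               A is = v 0 * tpow (std_basis 0) is + v ((n - 1) * m) * tpow (std_basis (n - 1)) is))
       \<and> (v 0 = 0 \<and> (\<exists>j. 1 \<le> j \<and> j \<le> m - 1 \<and> v j \<noteq> 0) \<longrightarrow>
            \<not> completely_positive m n A)"
proof (rule conjI[OF impI conjI[OF impI impI]])
  assume "v 0 = 0 \<and> v ((n - 1) * m) = 0"
  then show "completely_positive m n A \<longleftrightarrow> zero_tensor m n A"
    using completely_positive_hankel_iff_zero_tensor assms(1,3) by blast
next
  assume asm: "n \<ge> 3 \<and> completely_positive m n A \<and>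
    (\<exists>i. 1 \<le> i \<and> i \<le> n - 2 \<and> v (i * m) = 0)"
  then obtain i where "3 \<le> n" "1 \<le> i" "i \<le> n - 2" "v (i * m) = 0"
    by blast
  moreover have "0 < i" "i < n - 1"
    using calculation by linarith+
  ultimately show "v 0 \<ge> 0 \<and> v ((n - 1) * m) \<ge> 0 \<and>
      (\<forall>is. valid_idx m n is \<longrightarrow>
        A is = v 0 * tpow (std_basis 0) is + v ((n - 1) * m) * tpow (std_basis (n - 1)) is)"
    using completely_positive_hankel_eq_corners[OF assms(1) _ assms(3)] asm by blast
next
  assume "v 0 = 0 \<and> (\<exists>j. 1 \<le> j \<and> j \<le> m - 1 \<and> v j \<noteq> 0)"
  then obtain j where "v 0 = 0" "j \<le> m - 1" "v j \<noteq> 0"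
    by blast
  moreover have "j < m"
    using assms(1) calculation by linarith
  ultimately show "\<not> completely_positive m n A"
    using not_completely_positive_hankel assms(2,3) by blast
qed

end
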